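(* Let $\mathcal K\in\mathbb N^+$ and $\psi\in(0,1/2]$ be such that $\psi\mathcal K$ is a positive integer, and let $\delta\in(0,1)$. Consider independent samples, each uniform among $\mathcal K$ coupon types. With probability at least $1-\delta$, the number of samples needed to collect all but $\psi\mathcal K$ of the coupon types (that is, to see $\mathcal K(1-\psi)$ distinct types) is at most $$\mathcal K\ln\psi^{-1}+\psi^{-1}\ln\delta^{-1}+\sqrt{2\mathcal K\psi^{-1}\ln\psi^{-1}\ln\delta^{-1}}=O\!\left(\mathcal K\ln\psi^{-1}+\psi^{-1}\ln\delta^{-1}\right).$$ *)

theory Defs
  imports "HOL-Probability.Probability"
begin

text \<open>The first N samples of the coupon collector process over K types:
  a uniformly random function from sample indices {..<N} to types {..<K}
  (equivalently, N independent uniform samples).\<close>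
definition coupon_samples :: "nat \<Rightarrow> nat \<Rightarrow> (nat \<Rightarrow> nat) pmf" where
  "coupon_samples K N = pmf_of_set (PiE {..<N} (\<lambda>_. {..<K}))"

definition distinct_seen :: "nat \<Rightarrow> (nat \<Rightarrow> nat) \<Rightarrow> nat" where
  "distinct_seen N f = card (f ` {..<N})"

end

theory Submission
  imports Defs
begin

text \<open>Let \<open>U\<close> be the number of types not seen among \<open>N\<close> samples; failure means \<open>U > \<psi>K\<close>.
  Writing \<open>z^U\<close> as the sum of \<open>(z - 1)^|S|\<close> over the sets \<open>S\<close> of unseen types and bounding the
  probability \<open>(1 - |S|/K)^N\<close> that all of \<open>S\<close> is avoided by \<open>((1 - 1/K)^N)^|S|\<close> shows that \<open>E z^U\<close>
  is at most \<open>(1 + (z - 1) (1 - 1/K)^N)^K\<close>, as if the \<open>K\<close> types were missed independently.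
  With \<open>N \<approx> K (ln (1/\<psi>) + s)\<close> and the optimal Markov parameter \<open>z\<close>, the failure probability is at
  most \<open>exp (- K (s - (1 - \<psi>) ln z))\<close>. Comparing derivatives in \<open>s\<close>, this exponent is at least
  \<open>\<psi> (c + s - sqrt (c^2 + 2 s c))\<close> with \<open>c = ln (1/\<psi>)\<close>, and choosing \<open>s\<close> to make the latter equal
  to \<open>ln (1/\<delta>) / K\<close> gives the stated number of samples.\<close>

lemma sum_Pow_power_card:
  fixes x :: "'a :: comm_semiring_1"
  assumes "finite A"
  shows "(\<Sum>S\<in>Pow A. x ^ card S) = (x + 1) ^ card A"
  using prod_add[OF assms, of "\<lambda>_. x" "\<lambda>_. 1"] by simp

lemma card_PiE_avoiding:
  assumes "S \<subseteq> {..<K}"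
  shows "card (PiE {..<N} (\<lambda>_. {..<K}) \<inter> {f. S \<subseteq> {..<K} - f ` {..<N}}) = (K - card S) ^ N"
proof -
  have "PiE {..<N} (\<lambda>_. {..<K}) \<inter> {f. S \<subseteq> {..<K} - f ` {..<N}} = PiE {..<N} (\<lambda>_. {..<K} - S)"
    using assms by (auto simp: PiE_def Pi_def)
  thus ?thesis
    using assms by (simp add: card_PiE card_Diff_subset finite_subset)
qed

lemma sum_power_card_unseen:
  fixes t :: "'a :: comm_semiring_1"
  shows "(\<Sum>f\<in>PiE {..<N} (\<lambda>_. {..<K}). (t + 1) ^ card ({..<K} - f ` {..<N}))
           = (\<Sum>S\<in>Pow {..<K}. t ^ card S * of_nat (K - card S) ^ N)"
proof -
  let ?\<Omega> = "PiE {..<N} (\<lambda>_. {..<K})"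
  have "(\<Sum>f\<in>?\<Omega>. (t + 1) ^ card ({..<K} - f ` {..<N}))
        = (\<Sum>f\<in>?\<Omega>. \<Sum>S\<in>Pow {..<K}. if S \<subseteq> {..<K} - f ` {..<N} then t ^ card S else 0)"
  proof (rule sum.cong[OF refl])
    fix f
    have "(t + 1) ^ card ({..<K} - f ` {..<N}) = (\<Sum>S\<in>Pow ({..<K} - f ` {..<N}). t ^ card S)"
      by (simp add: sum_Pow_power_card)
    also have "\<dots> = (\<Sum>S\<in>Pow {..<K}. if S \<subseteq> {..<K} - f ` {..<N} then t ^ card S else 0)"
      by (rule sum.mono_neutral_cong_left) auto
    finally show "(t + 1) ^ card ({..<K} - f ` {..<N}) = \<dots>" .
  qed
  also have "\<dots> = (\<Sum>S\<in>Pow {..<K}. \<Sum>f\<in>?\<Omega>. if S \<subseteq> {..<K} - f ` {..<N} then t ^ card S else 0)"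
    by (rule sum.swap)
  also have "\<dots> = (\<Sum>S\<in>Pow {..<K}. t ^ card S * of_nat (K - card S) ^ N)"
    by (intro sum.cong refl) (simp add: sum.If_cases finite_PiE card_PiE_avoiding mult.commute)
  finally show ?thesis .
qed

lemma real_diff_power_le:
  assumes "s \<le> K" "K > 0"
  shows "real (K - s) ^ N \<le> real K ^ N * ((1 - 1 / real K) ^ N) ^ s"
proof -
  have "1 + real s * (- 1 / real K) \<le> (1 + (- 1 / real K)) ^ s"
    by (rule Bernoulli_inequality) (use assms in simp)
  hence "1 - real s / real K \<le> (1 - 1 / real K) ^ s"
    by simp
  moreover have "0 \<le> 1 - real s / real K"
    using assms by (simp add: field_simps)
  ultimately have "(1 - real s / real K) ^ N \<le> ((1 - 1 / real K) ^ s) ^ N"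
    by (rule power_mono)
  also have "\<dots> = ((1 - 1 / real K) ^ N) ^ s"
    by (simp flip: power_mult add: mult.commute)
  finally have "(1 - real s / real K) ^ N \<le> ((1 - 1 / real K) ^ N) ^ s" .
  moreover have "real (K - s) = real K * (1 - real s / real K)"
    using assms by (simp add: field_simps)
  ultimately show ?thesis
    by (simp add: power_mult_distrib mult_left_mono)
qed

lemma sum_power_card_unseen_le:
  fixes t :: real
  assumes "K > 0" "t \<ge> 0"
  shows "(\<Sum>f\<in>PiE {..<N} (\<lambda>_. {..<K}). (t + 1) ^ card ({..<K} - f ` {..<N}))
           \<le> real K ^ N * (1 + t * (1 - 1 / real K) ^ N) ^ K"
proof -
  let ?q = "(1 - 1 / real K) ^ N"
  have "(\<Sum>S\<in>Pow {..<K}. t ^ card S * real (K - card S) ^ N)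
          \<le> (\<Sum>S\<in>Pow {..<K}. t ^ card S * (real K ^ N * ?q ^ card S))"
  proof (rule sum_mono)
    fix S assume "S \<in> Pow {..<K}"
    hence "card S \<le> K"
      using card_mono[of "{..<K}" S] by auto
    thus "t ^ card S * real (K - card S) ^ N \<le> t ^ card S * (real K ^ N * ?q ^ card S)"
      using assms real_diff_power_le by (simp add: mult_left_mono)
  qed
  also have "\<dots> = real K ^ N * (\<Sum>S\<in>Pow {..<K}. (t * ?q) ^ card S)"
    by (simp add: sum_distrib_left power_mult_distrib algebra_simps)
  also have "\<dots> = real K ^ N * (1 + t * ?q) ^ K"
    by (simp add: sum_Pow_power_card add.commute)
  finally show ?thesis
    by (simp add: sum_power_card_unseen)
qed

lemma prob_unseen_ge_le:
  fixes z :: real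
  assumes "K > 0" "z \<ge> 1"
  shows "measure_pmf.prob (coupon_samples K N) {f. r \<le> card ({..<K} - f ` {..<N})}
           \<le> (1 + (z - 1) * (1 - 1 / real K) ^ N) ^ K / z ^ r"
proof -
  let ?\<Omega> = "PiE {..<N} (\<lambda>_. {..<K})"
  let ?U = "\<lambda>f. card ({..<K} - f ` {..<N})"
  let ?E = "{f. r \<le> ?U f}"
  have fin: "finite ?\<Omega>" by (simp add: finite_PiE)
  have "real (card (?\<Omega> \<inter> ?E)) * z ^ r = (\<Sum>f\<in>?\<Omega> \<inter> ?E. z ^ r)"
    by simp
  also have "\<dots> \<le> (\<Sum>f\<in>?\<Omega> \<inter> ?E. z ^ ?U f)"
    using assms by (intro sum_mono power_increasing) auto
  also have "\<dots> \<le> (\<Sum>f\<in>?\<Omega>. z ^ ?U f)"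
    using fin assms by (intro sum_mono2) auto
  also have "\<dots> \<le> real K ^ N * (1 + (z - 1) * (1 - 1 / real K) ^ N) ^ K"
    using sum_power_card_unseen_le[of K "z - 1" N] assms by simp
  finally have "real (card (?\<Omega> \<inter> ?E)) / real K ^ N
                  \<le> (1 + (z - 1) * (1 - 1 / real K) ^ N) ^ K / z ^ r"
    using assms by (simp add: field_simps)
  moreover have "?\<Omega> \<noteq> {}"
    using assms by (auto simp: PiE_eq_empty_iff)
  ultimately show ?thesis
    using fin by (simp add: coupon_samples_def measure_pmf_of_set card_PiE)
qed

lemma prob_distinct_seen_ge:
  assumes "K > 0"
  shows "measure_pmf.prob (coupon_samples K N) {f. real K - real m \<le> real (distinct_seen N f)}
           = 1 - measure_pmf.prob (coupon_samples K N) {f. m + 1 \<le> card ({..<K} - f ` {..<N})}"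
proof -
  let ?\<Omega> = "PiE {..<N} (\<lambda>_. {..<K})"
  have "?\<Omega> \<noteq> {}"
    using assms by (auto simp: PiE_eq_empty_iff)
  hence "set_pmf (coupon_samples K N) = ?\<Omega>"
    by (simp add: coupon_samples_def finite_PiE)
  moreover have "card ({..<K} - f ` {..<N}) = K - distinct_seen N f" if "f \<in> ?\<Omega>" for f
  proof -
    have "f ` {..<N} \<subseteq> {..<K}"
      using that by (auto simp: PiE_def Pi_def)
    thus ?thesis
      by (simp add: distinct_seen_def card_Diff_subset finite_subset)
  qed
  ultimately have "AE f in coupon_samples K N.
      f \<in> {f. real K - real m \<le> real (distinct_seen N f)}
        \<longleftrightarrow> f \<in> UNIV - {f. m + 1 \<le> card ({..<K} - f ` {..<N})}"
    by (intro AE_pmfI) auto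
  hence "measure_pmf.prob (coupon_samples K N) {f. real K - real m \<le> real (distinct_seen N f)}
           = measure_pmf.prob (coupon_samples K N) (UNIV - {f. m + 1 \<le> card ({..<K} - f ` {..<N})})"
    by (rule measure_pmf.finite_measure_eq_AE) simp_all
  thus ?thesis
    using measure_pmf.prob_compl[of _ "coupon_samples K N"] by simp
qed

text \<open>\<open>z = chernoff_base \<psi> s\<close> minimises \<open>(1 + (z - 1) \<psi> exp (- s))^K / z^(\<psi>K)\<close>, the Markov bound
  for at least \<open>\<psi>K\<close> misses among \<open>K\<close> types missed independently with probability \<open>\<psi> exp (- s)\<close>;
  the minimum is \<open>exp (- K * chernoff_exponent \<psi> s)\<close>.\<close>
definition chernoff_base :: "real \<Rightarrow> real \<Rightarrow> real" where
  "chernoff_base \<psi> s = (exp s - \<psi>) / (1 - \<psi>)"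

definition chernoff_exponent :: "real \<Rightarrow> real \<Rightarrow> real" where
  "chernoff_exponent \<psi> s = s - (1 - \<psi>) * ln (chernoff_base \<psi> s)"

lemma chernoff_base_ge_one:
  assumes "\<psi> < 1" "s \<ge> 0"
  shows "chernoff_base \<psi> s \<ge> 1"
  using assms by (simp add: chernoff_base_def field_simps)

lemma chernoff_base_mgf_identity:
  assumes "\<psi> \<noteq> 1"
  shows "1 + (chernoff_base \<psi> s - 1) * (\<psi> * exp (- s)) = chernoff_base \<psi> s * exp (- s)"
  using assms by (simp add: chernoff_base_def field_simps exp_minus)

lemma sqrt_gap_deriv_le_chernoff_exponent_deriv:
  fixes \<psi> c x :: real
  assumes \<psi>: "0 < \<psi>" "\<psi> < 1" and c: "c \<ge> 1 - \<psi>" and x: "x \<ge> 0"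
  shows "\<psi> * (1 - c / sqrt (c\<^sup>2 + 2 * x * c)) \<le> \<psi> * (exp x - 1) / (exp x - \<psi>)"
proof -
  have c_pos: "c > 0" using c \<psi> by simp
  have exp_gap: "exp x - \<psi> \<ge> 1 - \<psi> + x"
    using exp_ge_add_one_self[of x] by simp
  hence exp_gap_pos: "exp x - \<psi> > 0"
    using \<psi> x by linarith
  have "(1 - \<psi>)\<^sup>2 * (c\<^sup>2 + 2 * x * c) = c\<^sup>2 * (1 - \<psi>)\<^sup>2 + 2 * x * c * ((1 - \<psi>) * (1 - \<psi>))"
    by (simp add: algebra_simps power2_eq_square)
  also have "\<dots> \<le> c\<^sup>2 * (1 - \<psi>)\<^sup>2 + 2 * x * c * (c * (1 - \<psi>))"
    using c \<psi> x c_pos by (intro add_left_mono mult_left_mono mult_right_mono) auto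
  also have "\<dots> \<le> c\<^sup>2 * (1 - \<psi> + x)\<^sup>2"
    using x c_pos \<psi> by (simp add: power2_eq_square algebra_simps)
  also have "\<dots> \<le> c\<^sup>2 * (exp x - \<psi>)\<^sup>2"
    using exp_gap \<psi> x by (intro mult_left_mono power_mono) auto
  finally have "sqrt ((1 - \<psi>)\<^sup>2 * (c\<^sup>2 + 2 * x * c)) \<le> sqrt (c\<^sup>2 * (exp x - \<psi>)\<^sup>2)"
    by simp
  hence "(1 - \<psi>) * sqrt (c\<^sup>2 + 2 * x * c) \<le> c * (exp x - \<psi>)"
    using \<psi> c_pos exp_gap_pos by (simp add: real_sqrt_mult)
  moreover have "0 < c\<^sup>2 + 2 * x * c"
    using c_pos x by (simp add: add_pos_nonneg)
  ultimately have "(1 - \<psi>) / (exp x - \<psi>) \<le> c / sqrt (c\<^sup>2 + 2 * x * c)"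
    using exp_gap_pos by (simp add: divide_simps mult.commute)
  moreover have "(exp x - 1) / (exp x - \<psi>) = 1 - (1 - \<psi>) / (exp x - \<psi>)"
    using exp_gap_pos by (simp add: field_simps)
  ultimately show ?thesis
    using \<psi> by (simp add: mult_left_mono flip: times_divide_eq_right)
qed

lemma sqrt_gap_le_chernoff_exponent:
  fixes \<psi> c s :: real
  assumes \<psi>: "0 < \<psi>" "\<psi> < 1" and c: "c \<ge> 1 - \<psi>" and s: "s \<ge> 0"
  shows "\<psi> * (c + s - sqrt (c\<^sup>2 + 2 * s * c)) \<le> chernoff_exponent \<psi> s"
proof -
  have c_pos: "c > 0" using c \<psi> by simp
  define g where
    "g x = x - (1 - \<psi>) * (ln (exp x - \<psi>) - ln (1 - \<psi>)) - \<psi> * (c + x - sqrt (c\<^sup>2 + 2 * x * c))"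
    for x
  have g_deriv: "(g has_real_derivative
      \<psi> * (exp x - 1) / (exp x - \<psi>) - \<psi> * (1 - c / sqrt (c\<^sup>2 + 2 * x * c))) (at x)"
    if "x \<ge> 0" for x
  proof -
    have "exp x \<ge> 1"
      using that by simp
    hence exp_gap_pos: "exp x - \<psi> > 0"
      using \<psi> by linarith
    have "0 < c\<^sup>2 + 2 * x * c"
      using that c_pos by (simp add: add_pos_nonneg)
    hence "((\<lambda>x. sqrt (c\<^sup>2 + 2 * x * c)) has_real_derivative c / sqrt (c\<^sup>2 + 2 * x * c)) (at x)"
      by (auto intro!: derivative_eq_intros simp: field_simps)
    moreover have "((\<lambda>x. ln (exp x - \<psi>)) has_real_derivative exp x / (exp x - \<psi>)) (at x)"
      using exp_gap_pos by (auto intro!: derivative_eq_intros)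
    ultimately have "(g has_real_derivative (1 - (1 - \<psi>) * (exp x / (exp x - \<psi>) - 0))
             - \<psi> * (0 + 1 - c / sqrt (c\<^sup>2 + 2 * x * c))) (at x)"
      unfolding g_def by (intro DERIV_diff DERIV_cmult DERIV_add DERIV_ident DERIV_const)
    moreover have "1 - (1 - \<psi>) * (exp x / (exp x - \<psi>) - 0) = \<psi> * (exp x - 1) / (exp x - \<psi>)"
      using exp_gap_pos by (simp add: field_simps)
    ultimately show ?thesis
      by simp
  qed
  have "g 0 \<le> g s"
  proof (rule DERIV_nonneg_imp_increasing_open[OF s])
    fix x :: real assume "0 < x"
    hence "x \<ge> 0" by simp
    thus "\<exists>y. (g has_real_derivative y) (at x) \<and> y \<ge> 0"
      using g_deriv sqrt_gap_deriv_le_chernoff_exponent_deriv[OF \<psi> c] by force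
  next
    show "continuous_on {0..s} g"
      using g_deriv by (intro DERIV_continuous_on) (auto intro: has_field_derivative_at_within)
  qed
  moreover have "g 0 = 0"
    using c_pos by (simp add: g_def)
  moreover have "exp s - \<psi> > 0"
    using \<psi> s one_le_exp_iff[of s] by linarith
  ultimately show ?thesis
    using \<psi> by (simp add: g_def chernoff_exponent_def chernoff_base_def ln_div)
qed

lemma one_plus_mult_exp_inverse_power_le:
  fixes y :: real
  assumes K: "real K \<ge> 2" and y: "y \<ge> 0"
  shows "(1 + y * exp (1 / real K)) ^ K \<le> exp (2 * y / (1 + y)) * (1 + y) ^ K"
proof -
  have "exp (1 / real K) \<le> 1 + 2 * (1 / real K)"
    using K by (intro real_exp_bound_lemma) (simp_all add: field_simps)
  hence "1 + y * exp (1 / real K) \<le> 1 + y * (1 + 2 * (1 / real K))"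
    using y by (intro add_left_mono mult_left_mono)
  also have "\<dots> = (1 + y) * (1 + (2 * y / (1 + y)) / real K)"
  proof -
    have "1 + y \<noteq> 0"
      using y by simp
    thus ?thesis
      by (simp add: distrib_left)
  qed
  finally have "(1 + y * exp (1 / real K)) ^ K \<le> (1 + y) ^ K * (1 + (2 * y / (1 + y)) / real K) ^ K"
    using y by (simp add: power_mono flip: power_mult_distrib)
  also have "\<dots> \<le> (1 + y) ^ K * exp (2 * y / (1 + y))"
  proof -
    have "- real K \<le> 2 * y / (1 + y)"
      using y by (smt (verit) divide_nonneg_nonneg of_nat_0_le_iff)
    thus ?thesis
      using K y by (intro mult_left_mono exp_ge_one_plus_x_over_n_power_n) auto
  qed
  finally show ?thesis
    by (simp add: mult.commute)
qed

lemma chernoff_power_le: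
  fixes \<psi> \<delta> s z :: real
  assumes "\<psi> * real K = real m" "\<delta> > 0" "z > 0"
    and "ln (1 / \<delta>) \<le> real K * (s - (1 - \<psi>) * ln z)"
  shows "(z * exp (- s)) ^ K \<le> \<delta> * z ^ m"
proof -
  have "(z * exp (- s)) ^ K = exp (real K * ln z) * exp (real K * (- s))"
    by (simp only: exp_of_nat_mult power_mult_distrib exp_ln[OF assms(3)])
  also have "\<dots> = exp (real K * ln z + real K * (- s))"
    by (rule exp_add[symmetric])
  also have "real K * ln z + real K * (- s) = - (real K * (s - (1 - \<psi>) * ln z)) + real m * ln z"
    by (simp add: algebra_simps flip: assms(1))
  also have "exp \<dots> = exp (- (real K * (s - (1 - \<psi>) * ln z))) * exp (real m * ln z)"
    by (rule exp_add)
  also have "\<dots> \<le> \<delta> * exp (real m * ln z)"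
    using assms(2,4) by (simp add: ln_div ln_ge_iff[symmetric])
  also have "exp (real m * ln z) = z ^ m"
    using assms(3) by (simp add: exp_of_nat_mult)
  finally show ?thesis .
qed

text \<open>Rounding the sample size down costs a factor \<open>exp (1/K)\<close> in \<open>(1 - 1/K)^N\<close>, which is absorbed
  by one extra factor \<open>z\<close>; hence \<open>m + 1\<close> rather than \<open>m\<close>.\<close>
lemma unseen_mgf_le:
  fixes \<psi> \<delta> s :: real
  assumes \<psi>: "0 < \<psi>" "2 * \<psi> \<le> 1" and m: "\<psi> * real K = real m" "m > 0"
    and s: "s \<ge> 0" and \<delta>: "\<delta> > 0"
    and exponent: "ln (1 / \<delta>) \<le> real K * chernoff_exponent \<psi> s"
    and N: "real K * (ln (1 / \<psi>) + s) - 1 \<le> real N"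
  shows "(1 + (chernoff_base \<psi> s - 1) * (1 - 1 / real K) ^ N) ^ K \<le> \<delta> * chernoff_base \<psi> s ^ (m + 1)"
proof -
  define z where "z = chernoff_base \<psi> s"
  define y where "y = (z - 1) * (\<psi> * exp (- s))"
  have z: "z \<ge> 1"
    using \<psi> s chernoff_base_ge_one by (simp add: z_def)
  have y: "y \<ge> 0" "1 + y = z * exp (- s)"
    using z \<psi> chernoff_base_mgf_identity[of \<psi> s] by (simp_all add: y_def z_def)
  have K: "real K \<ge> 2"
  proof -
    have "1 \<le> \<psi> * real K"
      using m by simp
    also have "\<dots> \<le> real K / 2"
      using mult_right_mono[OF \<psi>(2), of "real K"] by simp
    finally show ?thesis by simp
  qed
  have "(1 - 1 / real K) ^ N \<le> exp (- 1 / real K) ^ N"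
    using K exp_ge_add_one_self[of "- 1 / real K"] by (intro power_mono) simp_all
  also have "\<dots> = exp (- (real N / real K))"
    by (simp add: exp_of_nat_mult[symmetric])
  also have "\<dots> \<le> exp (- (ln (1 / \<psi>) + s) + 1 / real K)"
    using N K by (simp add: field_simps)
  also have "\<dots> = \<psi> * exp (- s) * exp (1 / real K)"
    using \<psi> by (simp add: exp_add exp_diff ln_div exp_minus field_simps)
  finally have "(1 - 1 / real K) ^ N \<le> \<psi> * exp (- s) * exp (1 / real K)" .
  moreover have "0 \<le> (1 - 1 / real K) ^ N"
    using K by simp
  ultimately have "(1 + (z - 1) * (1 - 1 / real K) ^ N) ^ K \<le> (1 + y * exp (1 / real K)) ^ K"
    using z by (intro power_mono) (simp_all add: y_def mult_left_mono mult.assoc)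
  also have "\<dots> \<le> exp (2 * y / (1 + y)) * (1 + y) ^ K"
    using K y(1) by (rule one_plus_mult_exp_inverse_power_le)
  also have "\<dots> \<le> z * (z * exp (- s)) ^ K"
  proof -
    have "2 * y / (1 + y) = (2 * \<psi>) * (1 - 1 / z)"
      using y z by (simp add: y_def field_simps)
    also have "\<dots> \<le> 1 - 1 / z"
      using \<psi> z by (simp add: mult_left_le_one_le)
    also have "\<dots> \<le> ln z"
      using ln_le_minus_one[of "1 / z"] z by (simp add: ln_div)
    finally have "exp (2 * y / (1 + y)) \<le> z"
      using z by (simp add: ln_ge_iff)
    thus ?thesis
      unfolding y(2)[symmetric] using y(1) by (simp add: mult_right_mono)
  qed
  also have "\<dots> \<le> z * (\<delta> * z ^ m)"
    using chernoff_power_le[OF m(1) \<delta>, of z s] exponent z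
    by (simp add: chernoff_exponent_def z_def mult_left_mono)
  finally show ?thesis
    by (simp add: z_def algebra_simps)
qed

text \<open>The shift \<open>s\<close> solves \<open>\<psi> (c + s - sqrt (c^2 + 2 s c)) = ln (1/\<delta>) / K\<close> for \<open>c = ln (1/\<psi>)\<close>;
  this is where the square-root term of the bound comes from.\<close>
lemma coupon_bound_eq_chernoff_shift:
  fixes \<psi> \<delta> :: real
  assumes K: "K > 0" and \<psi>: "0 < \<psi>" "\<psi> < 1" and \<delta>: "0 < \<delta>" "\<delta> \<le> 1"
  obtains s where "s \<ge> 0"
    and "real K * ln (1 / \<psi>) + (1 / \<psi>) * ln (1 / \<delta>)
           + sqrt (2 * real K * (1 / \<psi>) * ln (1 / \<psi>) * ln (1 / \<delta>)) = real K * (ln (1 / \<psi>) + s)"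
    and "ln (1 / \<delta>) \<le> real K * chernoff_exponent \<psi> s"
proof -
  define c where "c = ln (1 / \<psi>)"
  define l where "l = ln (1 / \<delta>) / real K"
  define a where "a = sqrt (2 * l * c / \<psi>)"
  have c: "c \<ge> 1 - \<psi>"
    using ln_le_minus_one[OF \<psi>(1)] \<psi> by (simp add: c_def ln_div)
  have l: "l \<ge> 0"
    using \<delta> by (simp add: l_def)
  have a: "a \<ge> 0" "a\<^sup>2 = 2 * l * c / \<psi>"
    using l c \<psi> by (simp_all add: a_def)
  have "sqrt (2 * real K * (1 / \<psi>) * ln (1 / \<psi>) * ln (1 / \<delta>)) = sqrt ((real K)\<^sup>2 * (2 * l * c / \<psi>))"
    using K by (simp add: l_def c_def power2_eq_square field_simps)
  also have "\<dots> = real K * a"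
    by (simp only: a_def real_sqrt_mult real_sqrt_abs abs_of_nat)
  finally have "real K * ln (1 / \<psi>) + (1 / \<psi>) * ln (1 / \<delta>)
      + sqrt (2 * real K * (1 / \<psi>) * ln (1 / \<psi>) * ln (1 / \<delta>)) = real K * (ln (1 / \<psi>) + (l / \<psi> + a))"
    using K by (simp add: l_def c_def field_simps)
  moreover have "c\<^sup>2 + 2 * (l / \<psi> + a) * c = (c + a)\<^sup>2"
    using a \<psi> by (simp add: power2_eq_square field_simps)
  hence "\<psi> * (c + (l / \<psi> + a) - sqrt (c\<^sup>2 + 2 * (l / \<psi> + a) * c)) = l"
    using a c \<psi> by simp
  hence "l \<le> chernoff_exponent \<psi> (l / \<psi> + a)"
    using sqrt_gap_le_chernoff_exponent[OF \<psi> c, of "l / \<psi> + a"] l a \<psi> by simp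
  hence "ln (1 / \<delta>) \<le> real K * chernoff_exponent \<psi> (l / \<psi> + a)"
    using K by (simp add: l_def field_simps)
  moreover have "l / \<psi> + a \<ge> 0"
    using l a \<psi> by simp
  ultimately show ?thesis
    using that by blast
qed

theorem mainTheorem8:
  fixes K :: nat and \<psi> \<delta> :: real
  assumes "K > 0"
    and "0 < \<psi>" and "\<psi> \<le> 1/2"
    and "\<exists>m::nat. m > 0 \<and> \<psi> * real K = real m"
    and "0 < \<delta>" and "\<delta> < 1"
  defines "B \<equiv> real K * ln (1/\<psi>) + (1/\<psi>) * ln (1/\<delta>)
                + sqrt (2 * real K * (1/\<psi>) * ln (1/\<psi>) * ln (1/\<delta>))"
  shows "measure_pmf.prob (coupon_samples K (nat \<lfloor>B\<rfloor>))
           {f. real (distinct_seen (nat \<lfloor>B\<rfloor>) f) \<ge> real K * (1 - \<psi>)} \<ge> 1 - \<delta>"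
proof -
  obtain m where m: "m > 0" "\<psi> * real K = real m"
    using assms(4) by blast
  obtain s where s: "s \<ge> 0" "B = real K * (ln (1 / \<psi>) + s)"
    and exponent: "ln (1 / \<delta>) \<le> real K * chernoff_exponent \<psi> s"
    using coupon_bound_eq_chernoff_shift[of K \<psi> \<delta>] assms unfolding B_def by force
  let ?N = "nat \<lfloor>B\<rfloor>" and ?z = "chernoff_base \<psi> s"
  have "ln (1 / \<psi>) \<ge> 0"
    using assms(2,3) by simp
  hence "real K * (ln (1 / \<psi>) + s) - 1 \<le> real ?N"
    using s by linarith
  hence "(1 + (?z - 1) * (1 - 1 / real K) ^ ?N) ^ K \<le> \<delta> * ?z ^ (m + 1)"
    using unseen_mgf_le[OF assms(2) _ m(2,1) s(1) assms(5) exponent] assms(3) by simp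
  moreover have "?z \<ge> 1"
    using chernoff_base_ge_one assms(3) s(1) by simp
  ultimately have "measure_pmf.prob (coupon_samples K ?N) {f. m + 1 \<le> card ({..<K} - f ` {..<?N})} \<le> \<delta>"
    using prob_unseen_ge_le[OF assms(1), of ?z ?N "m + 1"] pos_divide_le_eq[of "?z ^ (m + 1)"]
    by (smt (verit) one_le_power)
  moreover have "real K * (1 - \<psi>) = real K - real m"
    using m by (simp add: algebra_simps)
  ultimately show ?thesis
    using prob_distinct_seen_ge[OF assms(1), of ?N m] by simp
qed

end
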